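(* Let $I\subseteq R$ be a good ideal. Then for every integer $t\ge0$, $$I_{t+1,0,\dots,0}=(I_{t,0,\dots,0}\cdot I):\langle\mu_1\rangle.$$
   Context: Let $\mathbb K$ be a field, $R=\mathbb K[x_1,\dots,x_n]$, $\mathfrak m=\langle x_1,\dots,x_n\rangle$, $\mathbb N=\{0,1,2,\dots\}$. A monomial $x_1^{\alpha_1}\cdots x_n^{\alpha_n}$ is identified with the point $(\alpha_1,\dots,\alpha_n)\in\mathbb N^n$. For a monomial ideal $I$, $G(I)$ denotes its (unique) minimal monomial generating set. If $I$ is an $\mathfrak m$-primary monomial ideal, then for each $i$ there is a unique $d_i\ge1$ with $x_i^{d_i}\in G(I)$; write $\mu_i=x_i^{d_i}$. For $(a_1,\dots,a_n)\in\mathbb N^n$ the box associated to $I$ is $B_{a_1,\dots,a_n}=([a_1d_1,(a_1+1)d_1]\times\cdots\times[a_nd_n,(a_n+1)d_n])\cap\mathbb N^n$; a monomial belongs to a box if its exponent vector does. An $\mathfrak m$-primary monomial ideal $I$ is called good if for every integer $l\ge1$, every element of $G(I^l)$ belongs to some box $B_{a_1,\dots,a_n}$ with $a_1+\dots+a_n=l-1$. For a good ideal $I$ and $a=(a_1,\dots,a_n)\in\mathbb N^n$, with $l=a_1+\dots+a_n+1$, define $I_{a_1,\dots,a_n}=\left\langle \frac{m}{\mu_1^{a_1}\cdots\mu_n^{a_n}} : m\in B_{a_1,\dots,a_n}\cap G(I^l)\right\rangle$. *)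

theory Defs
  imports Main
begin

(* Monomials of K[x_0,...,x_{n-1}] are identified with exponent vectors
   a :: nat => nat with a i = 0 for i >= n (variable x_{i+1} of the paper is index i).
   A monomial ideal is identified with the set of monomials it contains
   (an upward-closed set of exponent vectors); this determines it uniquely. *)

definition monomials :: "nat \<Rightarrow> (nat \<Rightarrow> nat) set" where
  "monomials n = {a. \<forall>i\<ge>n. a i = 0}"

definition is_monomial_ideal :: "nat \<Rightarrow> (nat \<Rightarrow> nat) set \<Rightarrow> bool" where
  "is_monomial_ideal n I \<longleftrightarrow> I \<subseteq> monomials n \<and>
     (\<forall>a\<in>I. \<forall>b\<in>monomials n. (\<forall>i. a i \<le> b i) \<longrightarrow> b \<in> I)"

definition mideal :: "nat \<Rightarrow> (nat \<Rightarrow> nat) set \<Rightarrow> (nat \<Rightarrow> nat) set" where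
  "mideal n G = {b \<in> monomials n. \<exists>a\<in>G. \<forall>i. a i \<le> b i}"

definition mgens :: "(nat \<Rightarrow> nat) set \<Rightarrow> (nat \<Rightarrow> nat) set" where
  "mgens I = {a \<in> I. \<forall>b\<in>I. (\<forall>i. b i \<le> a i) \<longrightarrow> b = a}"

definition mprod :: "nat \<Rightarrow> (nat \<Rightarrow> nat) set \<Rightarrow> (nat \<Rightarrow> nat) set \<Rightarrow> (nat \<Rightarrow> nat) set" where
  "mprod n I J = mideal n {(\<lambda>i. a i + b i) | a b. a \<in> I \<and> b \<in> J}"

definition mpow :: "nat \<Rightarrow> (nat \<Rightarrow> nat) set \<Rightarrow> nat \<Rightarrow> (nat \<Rightarrow> nat) set" where
  "mpow n I l = ((\<lambda>J. mprod n J I) ^^ l) (mideal n {(\<lambda>i. 0)})"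

definition mcolon :: "nat \<Rightarrow> (nat \<Rightarrow> nat) set \<Rightarrow> (nat \<Rightarrow> nat) set \<Rightarrow> (nat \<Rightarrow> nat) set" where
  "mcolon n J K = {b \<in> monomials n. \<forall>c\<in>K. (\<lambda>i. b i + c i) \<in> J}"

definition xpow :: "nat \<Rightarrow> nat \<Rightarrow> (nat \<Rightarrow> nat)" where
  "xpow i d = (\<lambda>j. if j = i then d else 0)"

definition m_primary :: "nat \<Rightarrow> (nat \<Rightarrow> nat) set \<Rightarrow> bool" where
  "m_primary n I \<longleftrightarrow> is_monomial_ideal n I \<and> (\<lambda>i. 0) \<notin> I \<and>
     (\<forall>i<n. \<exists>d. xpow i d \<in> I)"

definition dexp :: "(nat \<Rightarrow> nat) set \<Rightarrow> nat \<Rightarrow> nat" where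
  "dexp I i = (THE d. d \<ge> 1 \<and> xpow i d \<in> mgens I)"

definition box :: "nat \<Rightarrow> (nat \<Rightarrow> nat) set \<Rightarrow> (nat \<Rightarrow> nat) \<Rightarrow> (nat \<Rightarrow> nat) set" where
  "box n I a = {b \<in> monomials n. \<forall>i<n. a i * dexp I i \<le> b i \<and> b i \<le> (a i + 1) * dexp I i}"

definition good :: "nat \<Rightarrow> (nat \<Rightarrow> nat) set \<Rightarrow> bool" where
  "good n I \<longleftrightarrow> m_primary n I \<and>
     (\<forall>l\<ge>1. \<forall>m\<in>mgens (mpow n I l).
        \<exists>a\<in>monomials n. (\<Sum>i<n. a i) = l - 1 \<and> m \<in> box n I a)"

definition Ia :: "nat \<Rightarrow> (nat \<Rightarrow> nat) set \<Rightarrow> (nat \<Rightarrow> nat) \<Rightarrow> (nat \<Rightarrow> nat) set" where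
  "Ia n I a = mideal n {(\<lambda>i. m i - a i * dexp I i) | m.
      m \<in> box n I a \<inter> mgens (mpow n I ((\<Sum>i<n. a i) + 1))}"

end

(* For a good ideal the minimal generators of I^(l+1) lying in the box B_(l e_k) determine
   I_(l e_k), and two facts about them give the two inclusions, for every variable x_k.

   A generator of I^(t+2) in B_((t+1) e_k) is a generator of I^(t+1) times one of I, and since
   generators of I have exponents at most d_i, the first factor lies in B_(t e_k).

   Conversely, every C in I^(l+1) with C_k >= l d_k lies above a generator of I^(l+1) in
   B_(l e_k). If the generator below C sits in another box, C also dominates the corner
   x_k^(l d_k) x_j^(d_j) of I^(l+1) for some j <> k, and a generator below that corner must
   have x_k-exponent exactly l d_k: raising it to the power d_k + 1 and using that I is good
   for I^((d_k+1)(l+1)) shows that it cannot fall short. Applied to C = h x_k^((t+1) d_k)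
   this gives (I_(t e_k) I) : x_k^(d_k) inside I_((t+1) e_k). *)

theory Submission
  imports Defs
begin

lemma monomials_add:
  "a \<in> monomials n \<Longrightarrow> b \<in> monomials n \<Longrightarrow> (\<lambda>i. a i + b i) \<in> monomials n"
  unfolding monomials_def by auto

lemma xpow_in_monomials: "k < n \<Longrightarrow> xpow k d \<in> monomials n"
  unfolding monomials_def xpow_def by auto

lemma is_monomial_ideal_mideal: "is_monomial_ideal n (mideal n G)"
  unfolding is_monomial_ideal_def mideal_def by (auto intro: order_trans)

lemma mprod_intro:
  "a \<in> J \<Longrightarrow> b \<in> K \<Longrightarrow> y \<in> monomials n \<Longrightarrow> \<forall>i. a i + b i \<le> y i \<Longrightarrow> y \<in> mprod n J K"
  unfolding mprod_def mideal_def by fastforce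

lemma mprod_elim:
  assumes "y \<in> mprod n J K"
  obtains a b where "a \<in> J" "b \<in> K" "y \<in> monomials n" "\<forall>i. a i + b i \<le> y i"
  using assms unfolding mprod_def mideal_def by blast

lemma is_monomial_ideal_mprod: "is_monomial_ideal n (mprod n J K)"
  unfolding mprod_def by (rule is_monomial_ideal_mideal)

lemma mcolon_principal:
  assumes "is_monomial_ideal n J" "g \<in> monomials n"
  shows "mcolon n J (mideal n {g}) = {h \<in> monomials n. (\<lambda>i. h i + g i) \<in> J}"
proof -
  have "(\<lambda>i. h i + c i) \<in> J"
    if "(\<lambda>i. h i + g i) \<in> J" "c \<in> monomials n" "\<forall>i. g i \<le> c i" "h \<in> monomials n" for h c
    using assms(1) that monomials_add unfolding is_monomial_ideal_def by (meson add_left_mono)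
  then show ?thesis
    using assms(2) unfolding mcolon_def mideal_def by auto
qed

lemma mpow_0: "mpow n I 0 = monomials n"
  unfolding mpow_def mideal_def monomials_def by auto

lemma mpow_Suc: "mpow n I (Suc l) = mprod n (mpow n I l) I"
  unfolding mpow_def by simp

lemma is_monomial_ideal_mpow: "is_monomial_ideal n (mpow n I l)"
  by (cases l) (auto simp: mpow_def mprod_def is_monomial_ideal_mideal)

lemma mpow_subset_monomials: "mpow n I l \<subseteq> monomials n"
  using is_monomial_ideal_mpow unfolding is_monomial_ideal_def by blast

lemma mpow_upward:
  "x \<in> mpow n I l \<Longrightarrow> y \<in> monomials n \<Longrightarrow> \<forall>i. x i \<le> y i \<Longrightarrow> y \<in> mpow n I l"
  using is_monomial_ideal_mpow unfolding is_monomial_ideal_def by blast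

lemma mpow_1:
  assumes "is_monomial_ideal n I"
  shows "mpow n I 1 = I"
proof
  show "mpow n I 1 \<subseteq> I"
  proof
    fix y assume "y \<in> mpow n I 1"
    then obtain a b where "b \<in> I" "y \<in> monomials n" "\<forall>i. a i + b i \<le> y i"
      by (auto simp: mpow_Suc[of n I 0, simplified] elim: mprod_elim)
    then show "y \<in> I"
      using assms unfolding is_monomial_ideal_def by (meson add_leE)
  qed
  show "I \<subseteq> mpow n I 1"
  proof
    fix y assume "y \<in> I"
    moreover have "(\<lambda>i. 0) \<in> mpow n I 0"
      by (simp add: mpow_0 monomials_def)
    moreover have "y \<in> monomials n"
      using \<open>y \<in> I\<close> assms unfolding is_monomial_ideal_def by blast
    ultimately show "y \<in> mpow n I 1"
      using mprod_intro[of "\<lambda>i. 0" "mpow n I 0" y I] by (simp add: mpow_Suc[of n I 0, simplified])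
  qed
qed

lemma mpow_add:
  "a \<in> mpow n I l1 \<Longrightarrow> b \<in> mpow n I l2 \<Longrightarrow> (\<lambda>i. a i + b i) \<in> mpow n I (l1 + l2)"
proof (induction l2 arbitrary: b)
  case 0
  then have "a \<in> monomials n" "b \<in> monomials n"
    using mpow_subset_monomials by blast+
  then show ?case
    using mpow_upward[OF "0.prems"(1)] monomials_add by simp
next
  case (Suc l2)
  from Suc.prems(2) obtain b1 b2 where "b1 \<in> mpow n I l2" "b2 \<in> I" "b \<in> monomials n"
    and le: "\<forall>i. b1 i + b2 i \<le> b i"
    by (auto simp: mpow_Suc elim: mprod_elim)
  moreover have "(\<lambda>i. a i + b i) \<in> monomials n"
    using Suc.prems(1) \<open>b \<in> monomials n\<close> mpow_subset_monomials monomials_add by blast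
  ultimately show ?case
    using Suc.IH[OF Suc.prems(1)] le
    by (auto simp: mpow_Suc add.assoc intro!: mprod_intro)
qed

lemma mpow_mult:
  "a \<in> mpow n I l \<Longrightarrow> (\<lambda>i. k * a i) \<in> mpow n I (k * l)"
proof (induction k)
  case 0
  then show ?case by (simp add: mpow_0 monomials_def)
next
  case (Suc k)
  then show ?case using mpow_add[OF Suc.prems Suc.IH] by simp
qed

lemma mgens_subset: "mgens S \<subseteq> S"
  unfolding mgens_def by auto

lemma mgens_minimal: "a \<in> mgens S \<Longrightarrow> b \<in> S \<Longrightarrow> \<forall>i. b i \<le> a i \<Longrightarrow> b = a"
  unfolding mgens_def by blast

lemma sum_lessThan_eq_sum_support:
  fixes a :: "nat \<Rightarrow> 'a::comm_monoid_add"
  assumes "A \<subseteq> {..<n}" "\<forall>i<n. i \<notin> A \<longrightarrow> a i = 0"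
  shows "(\<Sum>i<n. a i) = (\<Sum>i\<in>A. a i)"
  using assms by (intro sum.mono_neutral_right) auto

lemma exists_mgens_below:
  assumes "S \<subseteq> monomials n" "c \<in> S"
  obtains m where "m \<in> mgens S" "\<forall>i. m i \<le> c i"
proof -
  define below where "below b \<longleftrightarrow> b \<in> S \<and> (\<forall>i. b i \<le> c i)" for b
  have "below c"
    using assms(2) unfolding below_def by simp
  then obtain m where m: "below m" and least: "\<And>b. below b \<Longrightarrow> (\<Sum>i<n. m i) \<le> (\<Sum>i<n. b i)"
    using ex_has_least_nat[of below c "\<lambda>b. \<Sum>i<n. b i"] by blast
  have "b = m" if b: "b \<in> S" "\<forall>i. b i \<le> m i" for b
  proof (rule ccontr)
    assume "b \<noteq> m"
    then obtain i where i: "b i \<noteq> m i"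
      by blast
    have "b \<in> monomials n" "m \<in> monomials n"
      using b(1) m assms(1) unfolding below_def by blast+
    with i have "i < n"
      unfolding monomials_def by (cases "i < n") auto
    then have "(\<Sum>i<n. b i) < (\<Sum>i<n. m i)"
      using b(2) i by (intro sum_strict_mono_ex1) (auto simp: le_less)
    moreover have "below b"
      using b m unfolding below_def by (metis order_trans)
    ultimately show False
      using least leD by blast
  qed
  then show ?thesis
    using m that unfolding mgens_def below_def by blast
qed

lemma mgens_mpow_Suc_split:
  assumes "m \<in> mgens (mpow n I (Suc l))" "is_monomial_ideal n I"
  obtains p q where "p \<in> mgens (mpow n I l)" "q \<in> mgens I" "\<forall>i. m i = p i + q i"
proof -
  have "m \<in> mprod n (mpow n I l) I"
    using assms(1) mgens_subset[of "mpow n I (Suc l)"] by (auto simp: mpow_Suc)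
  then obtain p0 q0 where p0: "p0 \<in> mpow n I l" and q0: "q0 \<in> I"
    and le: "\<forall>i. p0 i + q0 i \<le> m i"
    by (rule mprod_elim)
  obtain p where p: "p \<in> mgens (mpow n I l)" "\<forall>i. p i \<le> p0 i"
    using mpow_subset_monomials p0 by (rule exists_mgens_below)
  have "I \<subseteq> monomials n"
    using assms(2) unfolding is_monomial_ideal_def by blast
  then obtain q where q: "q \<in> mgens I" "\<forall>i. q i \<le> q0 i"
    using q0 by (rule exists_mgens_below)
  have "q \<in> mpow n I 1"
    using q(1) mgens_subset mpow_1[OF assms(2)] by blast
  then have "(\<lambda>i. p i + q i) \<in> mpow n I (Suc l)"
    using mpow_add[of p n I l q 1] p(1) mgens_subset by auto
  moreover have "\<forall>i. p i + q i \<le> m i"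
    using le p(2) q(2) by (metis add_mono order_trans)
  ultimately have "(\<lambda>i. p i + q i) = m"
    using mgens_minimal[OF assms(1)] by blast
  then show ?thesis
    using that p(1) q(1) by auto
qed

lemma xpow_same [simp]: "xpow i d i = d"
  and xpow_other [simp]: "j \<noteq> i \<Longrightarrow> xpow i d j = 0"
  unfolding xpow_def by auto

lemma below_xpow: "\<forall>j. b j \<le> xpow i d j \<Longrightarrow> b = xpow i (b i)"
  unfolding xpow_def by (rule ext) (metis le_zero_eq)

lemma xpow_Least_mgens:
  assumes "m_primary n I" "i < n"
  defines "d \<equiv> LEAST d. xpow i d \<in> I"
  shows "1 \<le> d" "xpow i d \<in> mgens I"
proof -
  have dI: "xpow i d \<in> I"
    using assms LeastI_ex[of "\<lambda>d. xpow i d \<in> I"] unfolding m_primary_def by blast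
  have least: "d \<le> d'" if "xpow i d' \<in> I" for d'
    unfolding d_def using that by (rule Least_le)
  show "1 \<le> d"
  proof (rule ccontr)
    assume "\<not> 1 \<le> d"
    then have "xpow i d = (\<lambda>j. 0)"
      unfolding xpow_def by auto
    with dI assms(1) show False
      unfolding m_primary_def by simp
  qed
  have "b = xpow i d" if "b \<in> I" "\<forall>j. b j \<le> xpow i d j" for b
  proof -
    have "b = xpow i (b i)"
      using that(2) by (rule below_xpow)
    moreover have "b i \<le> d"
      using that(2) by (metis xpow_same)
    ultimately show ?thesis
      using least that(1) by (metis antisym)
  qed
  with dI show "xpow i d \<in> mgens I"
    unfolding mgens_def by blast
qed

lemma dexp_eq_Least:
  assumes "m_primary n I" "i < n"
  shows "dexp I i = (LEAST d. xpow i d \<in> I)"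
  unfolding dexp_def
proof (rule the_equality)
  let ?d = "LEAST d. xpow i d \<in> I"
  show "1 \<le> ?d \<and> xpow i ?d \<in> mgens I"
    using xpow_Least_mgens[OF assms] by blast
  fix d assume d: "1 \<le> d \<and> xpow i d \<in> mgens I"
  then have "?d \<le> d"
    using mgens_subset by (blast intro: Least_le)
  then have "\<forall>j. xpow i ?d j \<le> xpow i d j"
    unfolding xpow_def by auto
  then have "xpow i ?d = xpow i d"
    using d xpow_Least_mgens(2)[OF assms] mgens_subset mgens_minimal by blast
  then show "d = ?d"
    by (metis xpow_same)
qed

lemma dexp_pos: "m_primary n I \<Longrightarrow> i < n \<Longrightarrow> 1 \<le> dexp I i"
  using xpow_Least_mgens dexp_eq_Least by metis

lemma xpow_dexp_in: "m_primary n I \<Longrightarrow> i < n \<Longrightarrow> xpow i (dexp I i) \<in> I"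
  using xpow_Least_mgens dexp_eq_Least mgens_subset by (metis subsetD)

lemma xpow_dexp_in_mpow:
  assumes "m_primary n I" "i < n"
  shows "xpow i (l * dexp I i) \<in> mpow n I l"
proof -
  have "is_monomial_ideal n I"
    using assms(1) unfolding m_primary_def by blast
  then have "xpow i (dexp I i) \<in> mpow n I 1"
    using xpow_dexp_in[OF assms] mpow_1 by blast
  moreover have "(\<lambda>j. l * xpow i (dexp I i) j) = xpow i (l * dexp I i)"
    unfolding xpow_def by auto
  ultimately show ?thesis
    using mpow_mult[of "xpow i (dexp I i)" n I 1 l] by simp
qed

lemma good_m_primary: "good n I \<Longrightarrow> m_primary n I"
  unfolding good_def by blast

lemma good_is_monomial_ideal: "good n I \<Longrightarrow> is_monomial_ideal n I"
  unfolding good_def m_primary_def by blast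

lemma good_mgens_in_box:
  assumes "good n I" "m \<in> mgens (mpow n I (Suc l))"
  obtains a where "(\<Sum>i<n. a i) = l" "m \<in> box n I a"
  using assms unfolding good_def by fastforce

lemma good_mgens_mpow_le:
  assumes "good n I" "m \<in> mgens (mpow n I (Suc l))" "i < n"
  shows "m i \<le> Suc l * dexp I i"
proof -
  obtain a where a: "(\<Sum>i<n. a i) = l" "m \<in> box n I a"
    using assms(1,2) by (rule good_mgens_in_box)
  have "a i \<le> l"
    using a(1) assms(3) member_le_sum[of i "{..<n}" a] by simp
  then have "(a i + 1) * dexp I i \<le> Suc l * dexp I i"
    by simp
  moreover have "m i \<le> (a i + 1) * dexp I i"
    using a(2) assms(3) unfolding box_def by blast
  ultimately show ?thesis
    by linarith
qed

lemma mem_box_xpow_iff: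
  assumes "k < n"
  shows "m \<in> box n I (xpow k l) \<longleftrightarrow> m \<in> monomials n \<and>
    l * dexp I k \<le> m k \<and> m k \<le> Suc l * dexp I k \<and> (\<forall>i<n. i \<noteq> k \<longrightarrow> m i \<le> dexp I i)"
  using assms unfolding box_def by (auto simp: xpow_def)

text \<open>Goodness of \<open>I\<^bsup>N(l+1)\<^esup>\<close> for \<open>N = d\<^sub>k + 1\<close>, applied to \<open>y\<^bsup>N\<^esup>\<close>, shows that \<open>y\<^sub>k\<close>
  falls short of \<open>l d\<^sub>k\<close> by at most \<open>d\<^sub>k / N < 1\<close>.\<close>

lemma good_mpow_pair_support_ge:
  assumes g: "good n I" and k: "k < n" and j: "j < n" "j \<noteq> k"
    and y: "y \<in> mpow n I (Suc l)"
    and supp: "\<forall>i<n. i \<noteq> k \<longrightarrow> i \<noteq> j \<longrightarrow> y i = 0" and yj: "y j \<le> dexp I j"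
  shows "l * dexp I k \<le> y k"
proof (rule ccontr)
  assume "\<not> l * dexp I k \<le> y k"
  then have low: "y k + 1 \<le> l * dexp I k"
    by simp
  have pos: "\<And>i. i < n \<Longrightarrow> 1 \<le> dexp I i"
    using g good_m_primary dexp_pos by blast
  define d where "d = dexp I k"
  define N where "N = Suc d"
  have "(\<lambda>i. N * y i) \<in> mpow n I (Suc (N * l + d))"
    using mpow_mult[OF y, of N] by (simp add: N_def ac_simps)
  with mpow_subset_monomials obtain m
    where m: "m \<in> mgens (mpow n I (Suc (N * l + d)))" "\<forall>i. m i \<le> N * y i"
    by (rule exists_mgens_below)
  obtain a where a: "(\<Sum>i<n. a i) = N * l + d" "m \<in> box n I a"
    using g m(1) by (rule good_mgens_in_box)
  have a_le: "a i * dexp I i \<le> N * y i" if "i < n" for i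
  proof -
    have "a i * dexp I i \<le> m i"
      using a(2) that unfolding box_def by blast
    then show ?thesis
      using m(2) le_trans by blast
  qed
  have "a i = 0" if "i < n" "i \<notin> {k, j}" for i
    using a_le[of i] supp pos[of i] that by simp
  then have "(\<Sum>i<n. a i) = a k + a j"
    using k j sum_lessThan_eq_sum_support[of "{k, j}" n a] by simp
  moreover have "a j \<le> N"
  proof -
    have "a j * dexp I j \<le> N * dexp I j"
      using a_le[OF j(1)] yj by (meson le_trans mult_le_mono2)
    then show ?thesis
      using pos[OF j(1)] by simp
  qed
  ultimately have "N * l \<le> a k + 1"
    using a(1) unfolding N_def by linarith
  then have "N * l * d \<le> (a k + 1) * d"
    by (rule mult_le_mono1)
  also have "\<dots> \<le> N * y k + d"
    using a_le[OF k] unfolding d_def by simp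
  finally have "N * l * d \<le> N * y k + d" .
  moreover have "N * (y k + 1) \<le> N * (l * d)"
    using low unfolding d_def by (rule mult_le_mono2)
  ultimately have "N * y k + N \<le> N * y k + d"
    by (simp add: mult.assoc)
  then show False
    unfolding N_def by simp
qed

lemma good_mgens_below_corner_in_box:
  assumes g: "good n I" and k: "k < n" and j: "j < n" "j \<noteq> k"
    and m: "m \<in> mgens (mpow n I (Suc l))"
    and below: "\<forall>i. m i \<le> xpow k (l * dexp I k) i + xpow j (dexp I j) i"
  shows "m \<in> box n I (xpow k l)"
proof -
  have m_in: "m \<in> mpow n I (Suc l)"
    using m mgens_subset by blast
  have supp: "\<forall>i<n. i \<noteq> k \<longrightarrow> i \<noteq> j \<longrightarrow> m i = 0"
    using below by (metis add_0 le_zero_eq xpow_other)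
  have mj: "m j \<le> dexp I j"
    using below j(2) by (metis add_0 xpow_other xpow_same)
  have "m k \<le> l * dexp I k"
    using below j(2) by (metis add_0_right xpow_other xpow_same)
  moreover have "l * dexp I k \<le> m k"
    using good_mpow_pair_support_ge[OF g k j m_in supp mj] .
  moreover have "\<forall>i<n. i \<noteq> k \<longrightarrow> m i \<le> dexp I i"
    using supp mj by (metis le0)
  moreover have "m \<in> monomials n"
    using m_in mpow_subset_monomials by blast
  ultimately show ?thesis
    using k by (auto simp: mem_box_xpow_iff)
qed

lemma good_mgens_in_axis_box_below:
  assumes g: "good n I" and k: "k < n" and C: "C \<in> mpow n I (Suc l)"
    and Ck: "l * dexp I k \<le> C k"
  obtains m where "m \<in> mgens (mpow n I (Suc l))" "m \<in> box n I (xpow k l)" "\<forall>i. m i \<le> C i"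
proof -
  have mp: "m_primary n I"
    using g by (rule good_m_primary)
  obtain m where m: "m \<in> mgens (mpow n I (Suc l))" "\<forall>i. m i \<le> C i"
    using mpow_subset_monomials C by (rule exists_mgens_below)
  obtain a where a: "(\<Sum>i<n. a i) = l" "m \<in> box n I a"
    using g m(1) by (rule good_mgens_in_box)
  show ?thesis
  proof (cases "\<exists>j<n. j \<noteq> k \<and> a j \<noteq> 0")
    case False
    then have "(\<Sum>i<n. a i) = a k"
      using k sum_lessThan_eq_sum_support[of "{k}" n a] by auto
    with a False have "\<forall>i<n. a i = xpow k l i"
      by (metis xpow_other xpow_same)
    then have "m \<in> box n I (xpow k l)"
      using a(2) unfolding box_def by auto
    with m that show ?thesis
      by blast
  next
    case True
    then obtain j where j: "j < n" "j \<noteq> k" "a j \<noteq> 0"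
      by blast
    have "dexp I j \<le> a j * dexp I j"
      using j(3) by simp
    also have "\<dots> \<le> m j"
      using a(2) j(1) unfolding box_def by blast
    finally have Cj: "dexp I j \<le> C j"
      using m(2) le_trans by blast
    define M where "M = (\<lambda>i. xpow k (l * dexp I k) i + xpow j (dexp I j) i)"
    have "M \<in> mpow n I (Suc l)"
      unfolding M_def
      using mpow_add[OF xpow_dexp_in_mpow[OF mp k] xpow_dexp_in_mpow[OF mp j(1), of 1]] by simp
    with mpow_subset_monomials obtain m' where m': "m' \<in> mgens (mpow n I (Suc l))" "\<forall>i. m' i \<le> M i"
      by (rule exists_mgens_below)
    have "\<forall>i. M i \<le> C i"
      unfolding M_def using Ck Cj j(2) by (auto simp: xpow_def)
    with m' have "\<forall>i. m' i \<le> C i"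
      using le_trans by blast
    moreover have "m' \<in> box n I (xpow k l)"
      using good_mgens_below_corner_in_box[OF g k j(1,2) m'(1)] m'(2) unfolding M_def .
    ultimately show ?thesis
      using m'(1) that by blast
  qed
qed

lemma good_mgens_axis_box_split:
  assumes g: "good n I" and k: "k < n"
    and m: "m \<in> mgens (mpow n I (Suc (Suc t)))" "m \<in> box n I (xpow k (Suc t))"
  obtains p q where "p \<in> mgens (mpow n I (Suc t))" "p \<in> box n I (xpow k t)" "q \<in> I"
    "\<forall>i. m i = p i + q i"
proof -
  have mi: "is_monomial_ideal n I"
    using g by (rule good_is_monomial_ideal)
  obtain p q where p: "p \<in> mgens (mpow n I (Suc t))" and q: "q \<in> mgens I"
    and pq: "\<forall>i. m i = p i + q i"
    using m(1) mi by (rule mgens_mpow_Suc_split)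
  have q_le: "q i \<le> dexp I i" if "i < n" for i
    using good_mgens_mpow_le[OF g _ that, of q 0] q mpow_1[OF mi] by simp
  have "p k \<le> Suc t * dexp I k"
    using good_mgens_mpow_le[OF g p k] .
  moreover have "t * dexp I k \<le> p k"
    using m(2) k pq q_le[OF k] by (auto simp: mem_box_xpow_iff)
  moreover have "\<forall>i<n. i \<noteq> k \<longrightarrow> p i \<le> dexp I i"
    using m(2) k pq by (auto simp: mem_box_xpow_iff)
  moreover have "p \<in> monomials n"
    using p mgens_subset mpow_subset_monomials by blast
  ultimately have "p \<in> box n I (xpow k t)"
    using k by (simp add: mem_box_xpow_iff)
  with p q pq mgens_subset that show ?thesis
    by blast
qed

lemma mem_Ia_xpow_iff:
  assumes "k < n"
  shows "h \<in> Ia n I (xpow k t) \<longleftrightarrow> h \<in> monomials n \<and>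
    (\<exists>m \<in> mgens (mpow n I (Suc t)) \<inter> box n I (xpow k t). \<forall>i. m i \<le> h i + xpow k (t * dexp I k) i)"
proof -
  have "(\<Sum>i<n. xpow k t i) = t"
    using assms sum_lessThan_eq_sum_support[of "{k}" n "xpow k t"] by simp
  moreover have "m i - xpow k t i * dexp I i \<le> h i \<longleftrightarrow> m i \<le> h i + xpow k (t * dexp I k) i"
    for m :: "nat \<Rightarrow> nat" and i
    by (cases "i = k") auto
  ultimately show ?thesis
    unfolding Ia_def mideal_def by auto
qed

lemma Ia_xpow_Suc_subset_mcolon:
  assumes g: "good n I" and k: "k < n"
  shows "Ia n I (xpow k (Suc t)) \<subseteq> mcolon n (mprod n (Ia n I (xpow k t)) I) (mideal n {xpow k (dexp I k)})"
proof
  fix h assume "h \<in> Ia n I (xpow k (Suc t))"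
  then obtain m where h: "h \<in> monomials n" and m: "m \<in> mgens (mpow n I (Suc (Suc t)))"
    "m \<in> box n I (xpow k (Suc t))" and mh: "\<forall>i. m i \<le> h i + xpow k (Suc t * dexp I k) i"
    using k by (auto simp: mem_Ia_xpow_iff)
  obtain p q where p: "p \<in> mgens (mpow n I (Suc t))" "p \<in> box n I (xpow k t)" and q: "q \<in> I"
    and pq: "\<forall>i. m i = p i + q i"
    using g k m by (rule good_mgens_axis_box_split)
  define g0 where "g0 = (\<lambda>i. p i - xpow k (t * dexp I k) i)"
  have pk: "t * dexp I k \<le> p k"
    using p(2) k by (simp add: mem_box_xpow_iff)
  then have "\<forall>i. p i \<le> g0 i + xpow k (t * dexp I k) i"
    unfolding g0_def by (simp add: xpow_def)
  moreover have "g0 \<in> monomials n"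
    using p(2) unfolding box_def monomials_def g0_def by auto
  ultimately have g0: "g0 \<in> Ia n I (xpow k t)"
    using p k by (auto simp: mem_Ia_xpow_iff)
  have "g0 i + q i \<le> h i + xpow k (dexp I k) i" for i
    using mh[rule_format, of i] pq[rule_format, of i] pk unfolding g0_def
    by (cases "i = k") auto
  then have "(\<lambda>i. h i + xpow k (dexp I k) i) \<in> mprod n (Ia n I (xpow k t)) I"
    using g0 q h k by (intro mprod_intro) (auto intro: monomials_add xpow_in_monomials)
  with h k show "h \<in> mcolon n (mprod n (Ia n I (xpow k t)) I) (mideal n {xpow k (dexp I k)})"
    by (simp add: mcolon_principal is_monomial_ideal_mprod xpow_in_monomials)
qed

lemma mcolon_subset_Ia_xpow_Suc:
  assumes g: "good n I" and k: "k < n"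
  shows "mcolon n (mprod n (Ia n I (xpow k t)) I) (mideal n {xpow k (dexp I k)}) \<subseteq> Ia n I (xpow k (Suc t))"
proof
  fix h assume "h \<in> mcolon n (mprod n (Ia n I (xpow k t)) I) (mideal n {xpow k (dexp I k)})"
  then have h: "h \<in> monomials n"
    and "(\<lambda>i. h i + xpow k (dexp I k) i) \<in> mprod n (Ia n I (xpow k t)) I"
    using k by (simp_all add: mcolon_principal is_monomial_ideal_mprod xpow_in_monomials)
  then obtain a b where a: "a \<in> Ia n I (xpow k t)" and b: "b \<in> I"
    and ab: "\<forall>i. a i + b i \<le> h i + xpow k (dexp I k) i"
    by (auto elim: mprod_elim)
  from a k obtain p where p: "p \<in> mgens (mpow n I (Suc t))"
    and pa: "\<forall>i. p i \<le> a i + xpow k (t * dexp I k) i"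
    by (auto simp: mem_Ia_xpow_iff)
  define C where "C = (\<lambda>i. h i + xpow k (Suc t * dexp I k) i)"
  have "b \<in> mpow n I 1"
    using b mpow_1[OF good_is_monomial_ideal[OF g]] by simp
  then have "(\<lambda>i. p i + b i) \<in> mpow n I (Suc (Suc t))"
    using mpow_add[of p n I "Suc t" b 1] p mgens_subset by auto
  moreover have "C \<in> monomials n"
    unfolding C_def using h k by (simp add: monomials_add xpow_in_monomials)
  moreover have "\<forall>i. p i + b i \<le> C i"
  proof
    fix i
    show "p i + b i \<le> C i"
      using pa[rule_format, of i] ab[rule_format, of i] unfolding C_def
      by (cases "i = k") auto
  qed
  ultimately have C: "C \<in> mpow n I (Suc (Suc t))"
    by (rule mpow_upward)
  have "Suc t * dexp I k \<le> C k"
    unfolding C_def by simp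
  with g k C obtain m where "m \<in> mgens (mpow n I (Suc (Suc t)))" "m \<in> box n I (xpow k (Suc t))"
    "\<forall>i. m i \<le> C i"
    by (rule good_mgens_in_axis_box_below)
  with h k show "h \<in> Ia n I (xpow k (Suc t))"
    unfolding C_def by (auto simp: mem_Ia_xpow_iff)
qed

theorem Ia_xpow_Suc_eq_mcolon:
  assumes "good n I" "k < n"
  shows "Ia n I (xpow k (Suc t)) = mcolon n (mprod n (Ia n I (xpow k t)) I) (mideal n {xpow k (dexp I k)})"
  using Ia_xpow_Suc_subset_mcolon[OF assms] mcolon_subset_Ia_xpow_Suc[OF assms] by (rule subset_antisym)

theorem mainTheorem11:
  fixes n :: nat and I :: "(nat \<Rightarrow> nat) set"
  assumes "n \<ge> 1" and "good n I"
  shows "\<forall>t::nat. Ia n I (xpow 0 (t + 1)) =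
           mcolon n (mprod n (Ia n I (xpow 0 t)) I) (mideal n {xpow 0 (dexp I 0)})"
  using Ia_xpow_Suc_eq_mcolon[OF assms(2), of 0] assms(1) by simp

end
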